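(* Let $X, Y \subseteq \omega$. There exists an embedding $\mathcal{K}_2^X \to \mathcal{B}^Y$ if and only if $X \le_T Y$.
   Context: A partial combinatory algebra (pca) is a set $A$ with a partial binary application $\cdot$ containing distinct elements $\mathrm{s},\mathrm{k}$ with $\mathrm{k}ab\downarrow = a$, $\mathrm{s}ab\downarrow$, and $\mathrm{s}abc \simeq (ac)(bc)$. Given pcas $\mathcal{A},\mathcal{B}$, an embedding $\mathcal{A}\hookrightarrow\mathcal{B}$ is an injection $f$ such that whenever $aa'\downarrow$ in $\mathcal{A}$, $f(a)f(a')\downarrow = f(aa')$. Kleene's second model $\mathcal{K}_2$ is taken with carrier $\omega^\omega$ and application $g\cdot h = \Phi^{g\oplus h}_{g(0)}$, where $\Phi_e$ is the $e$-th Turing functional and $g\cdot h$ is defined iff the function on the right is total. Van Oosten's sequential computation model $\mathcal{B}$ is the same definition but with carrier the set of partial functions $\omega\rightharpoonup\omega$ (application always defined). For $X\subseteq\omega$, $\mathcal{K}_2^X$ is the sub-pca of $X$-computable total functions and $\mathcal{B}^X$ the sub-pca of partial $X$-computable functions. *)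

theory Defs
  imports Main "HOL-Library.Nat_Bijection"
begin

datatype rf = Zero | Succ | Proj nat | Comp rf "rf list" | PrimRec rf rf | Mu rf | Oracle

definition arg :: "nat list \<Rightarrow> nat \<Rightarrow> nat" where
  "arg xs i = (if i < length xs then xs ! i else 0)"

text \<open>Big-step semantics relative to a partial oracle (queries to undefined
  points diverge, i.e. sequential computation).\<close>
inductive ev :: "(nat \<Rightarrow> nat option) \<Rightarrow> rf \<Rightarrow> nat list \<Rightarrow> nat \<Rightarrow> bool"
  for orc :: "nat \<Rightarrow> nat option" where
  ev_Zero: "ev orc Zero xs 0"
| ev_Succ: "ev orc Succ xs (Suc (arg xs 0))"
| ev_Proj: "ev orc (Proj i) xs (arg xs i)"
| ev_Comp: "list_all2 (\<lambda>g y. ev orc g xs y) gs ys \<Longrightarrow> ev orc f ys z \<Longrightarrow> ev orc (Comp f gs) xs z"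
| ev_PrimRec0: "arg xs 0 = 0 \<Longrightarrow> ev orc f (drop 1 xs) y \<Longrightarrow> ev orc (PrimRec f g) xs y"
| ev_PrimRecS: "arg xs 0 = Suc n \<Longrightarrow> ev orc (PrimRec f g) (n # drop 1 xs) y
     \<Longrightarrow> ev orc g (y # n # drop 1 xs) z \<Longrightarrow> ev orc (PrimRec f g) xs z"
| ev_Mu: "ev orc f (n # xs) 0 \<Longrightarrow> (\<forall>m<n. \<exists>k. ev orc f (m # xs) (Suc k)) \<Longrightarrow> ev orc (Mu f) xs n"
| ev_Oracle: "orc (arg xs 0) = Some y \<Longrightarrow> ev orc Oracle xs y"

lemma prod_decode_fst_le: "fst (prod_decode n) \<le> n"
  by (metis le_prod_encode_1 prod.collapse prod_decode_inverse)
lemma prod_decode_snd_le: "snd (prod_decode n) \<le> n"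
  by (metis le_prod_encode_2 prod.collapse prod_decode_inverse)

lemma pd1: "0 < n \<Longrightarrow> fst (prod_decode (n - Suc 0)) < n"
  using prod_decode_fst_le[of "n - Suc 0"] by linarith
lemma pd2: "0 < n \<Longrightarrow> snd (prod_decode (n - Suc 0)) < n"
  using prod_decode_snd_le[of "n - Suc 0"] by linarith
lemma pd3: "0 < n \<Longrightarrow> fst (prod_decode (snd (prod_decode (n - Suc 0)))) < n"
  using prod_decode_fst_le[of "snd (prod_decode (n - Suc 0))"] pd2[of n] by linarith
lemma pd4: "0 < n \<Longrightarrow> snd (prod_decode (snd (prod_decode (n - Suc 0)))) < n"
  using prod_decode_snd_le[of "snd (prod_decode (n - Suc 0))"] pd2[of n] by linarith

function decode :: "nat \<Rightarrow> rf" and decode_list :: "nat \<Rightarrow> rf list" where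
  "decode n =
    (if n = 0 then Zero else
     (let t = fst (prod_decode (n - 1)); r = snd (prod_decode (n - 1)) in
      if t = 0 then Succ
      else if t = 1 then Proj r
      else if t = 2 then Comp (decode (fst (prod_decode r))) (decode_list (snd (prod_decode r)))
      else if t = 3 then PrimRec (decode (fst (prod_decode r))) (decode (snd (prod_decode r)))
      else if t = 4 then Mu (decode r)
      else Oracle))"
| "decode_list n =
    (if n = 0 then [] else decode (fst (prod_decode (n - 1))) # decode_list (snd (prod_decode (n - 1))))"
  by pat_completeness auto
termination
proof (relation "measure (case_sum id id)", goal_cases)
  case 1 show ?case by simp
qed (auto simp: Let_def pd1 pd2 pd3 pd4)

definition Phi :: "nat \<Rightarrow> (nat \<Rightarrow> nat option) \<Rightarrow> nat \<Rightarrow> nat option" where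
  "Phi e orc n = (if \<exists>y. ev orc (decode e) [n] y then Some (THE y. ev orc (decode e) [n] y) else None)"

definition pjoin :: "(nat \<Rightarrow> nat option) \<Rightarrow> (nat \<Rightarrow> nat option) \<Rightarrow> nat \<Rightarrow> nat option" where
  "pjoin g h n = (if even n then g (n div 2) else h (n div 2))"

definition K2_app :: "(nat \<Rightarrow> nat) \<Rightarrow> (nat \<Rightarrow> nat) \<Rightarrow> (nat \<Rightarrow> nat) option" where
  "K2_app g h = (let r = Phi (g 0) (pjoin (Some \<circ> g) (Some \<circ> h)) in
     if \<forall>n. r n \<noteq> None then Some (\<lambda>n. the (r n)) else None)"

definition B_app :: "(nat \<Rightarrow> nat option) \<Rightarrow> (nat \<Rightarrow> nat option) \<Rightarrow> (nat \<Rightarrow> nat option)" where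
  "B_app g h = (case g 0 of None \<Rightarrow> (\<lambda>_. None) | Some e \<Rightarrow> Phi e (pjoin g h))"

definition chi :: "nat set \<Rightarrow> nat \<Rightarrow> nat" where
  "chi X n = (if n \<in> X then 1 else 0)"

definition K2_rel :: "nat set \<Rightarrow> (nat \<Rightarrow> nat) set" where
  "K2_rel X = {g. \<exists>e. \<forall>n. Phi e (Some \<circ> chi X) n = Some (g n)}"

definition B_rel :: "nat set \<Rightarrow> (nat \<Rightarrow> nat option) set" where
  "B_rel Y = {g. \<exists>e. Phi e (Some \<circ> chi Y) = g}"

definition turing_le :: "nat set \<Rightarrow> nat set \<Rightarrow> bool" where
  "turing_le X Y \<longleftrightarrow> chi X \<in> K2_rel Y"

definition embedding_K2_B :: "nat set \<Rightarrow> nat set \<Rightarrow> ((nat \<Rightarrow> nat) \<Rightarrow> (nat \<Rightarrow> nat option)) \<Rightarrow> bool" where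
  "embedding_K2_B X Y f \<longleftrightarrow>
     inj_on f (K2_rel X) \<and> f ` K2_rel X \<subseteq> B_rel Y \<and>
     (\<forall>a\<in>K2_rel X. \<forall>a'\<in>K2_rel X. \<forall>c. K2_app a a' = Some c \<longrightarrow> B_app (f a) (f a') = f c)"

end

theory Submission
  imports Defs
begin

text \<open>
  If X is Turing reducible to Y, substituting the reduction for every oracle call turns
  X-computable total functions into Y-computable ones, so \<open>\<lambda>g. Some \<circ> g\<close> is an embedding.

  Conversely, let f embed K2^X into B^Y and write [n] for the constant function with value n.
  An element of K2^X exchanging [0] and [1], together with the monotonicity of application in B,
  makes f [0] and f [1] incomparable, so they are told apart by a value a0 at a point p0 and a
  value a1 at a point p1. As [k] is the k-th iterate of a successor element on [0], and some
  element maps [n] to [chi X n], the partial function f [chi X k] is computed, uniformly in k,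
  relative to a nested join of Y and of Y-computable partial functions. Such a computation has a
  finite derivation that Y can check, so searching for a derivation of a0 at p0 or of a1 at p1
  decides X from Y.
\<close>

section \<open>Coding lists and programs\<close>

declare decode.simps[simp del] decode_list.simps[simp del]

definition hd_code :: "nat \<Rightarrow> nat" where
  "hd_code n = fst (prod_decode (n - 1))"

definition tl_code :: "nat \<Rightarrow> nat" where
  "tl_code n = snd (prod_decode (n - 1))"

definition cons_code :: "nat \<Rightarrow> nat \<Rightarrow> nat" where
  "cons_code x n = Suc (prod_encode (x, n))"

lemma prod_decode_0 [simp]: "prod_decode 0 = (0, 0)"
  by (simp add: prod_decode_def prod_decode_aux.simps)

lemma hd_code_0 [simp]: "hd_code 0 = 0" and tl_code_0 [simp]: "tl_code 0 = 0"
  by (simp_all add: hd_code_def tl_code_def)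

lemma hd_code_cons_code [simp]: "hd_code (cons_code x n) = x"
  and tl_code_cons_code [simp]: "tl_code (cons_code x n) = n"
  and cons_code_nonzero [simp]: "cons_code x n \<noteq> 0"
  by (simp_all add: hd_code_def tl_code_def cons_code_def)

lemma cons_code_eq_iff [simp]: "cons_code x n = cons_code x' n' \<longleftrightarrow> x = x' \<and> n = n'"
  by (simp add: cons_code_def prod_encode_eq)

lemma list_encode_Cons [simp]: "list_encode (x # xs) = cons_code x (list_encode xs)"
  by (simp add: cons_code_def)

declare list_encode.simps(2) [simp del]

lemma hd_code_less: "n \<noteq> 0 \<Longrightarrow> hd_code n < n"
  and tl_code_less: "n \<noteq> 0 \<Longrightarrow> tl_code n < n"
  by (simp_all add: hd_code_def tl_code_def pd1 pd2)

lemma list_decode_nonzero: "n \<noteq> 0 \<Longrightarrow> list_decode n = hd_code n # list_decode (tl_code n)"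
  by (cases n) (simp_all add: hd_code_def tl_code_def case_prod_beta)

lemma tl_code_funpow_0 [simp]: "(tl_code ^^ i) 0 = 0"
  by (induction i) auto

lemma nth_list_decode:
  "i < length (list_decode n) \<longleftrightarrow> (tl_code ^^ i) n \<noteq> 0"
  "i < length (list_decode n) \<Longrightarrow> list_decode n ! i = hd_code ((tl_code ^^ i) n)"
proof (induction i arbitrary: n)
  case 0
  { case 1 show ?case by (cases "n = 0") (simp_all add: list_decode_nonzero)
  next
    case 2 then show ?case by (cases "n = 0") (simp_all add: list_decode_nonzero) }
next
  case (Suc i)
  { case 1 show ?case
    proof (cases "n = 0")
      case False
      then show ?thesis
        unfolding list_decode_nonzero[OF False] using Suc.IH(1)[of "tl_code n"]
        by (simp add: funpow_swap1)
    qed simp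
  next
    case 2
    then have "n \<noteq> 0" by (cases "n = 0") simp_all
    have "i < length (list_decode (tl_code n))"
      using 2 unfolding list_decode_nonzero[OF \<open>n \<noteq> 0\<close>] by simp
    then show ?case
      using Suc.IH(2)[of "tl_code n"] unfolding list_decode_nonzero[OF \<open>n \<noteq> 0\<close>]
      by (simp add: funpow_swap1) }
qed

lemma length_list_decode_le: "length (list_decode n) \<le> n"
proof (induction n rule: less_induct)
  case (less n)
  show ?case
  proof (cases "n = 0")
    case False
    then have "length (list_decode (tl_code n)) < n"
      using less.IH[OF tl_code_less[OF False]] tl_code_less[OF False] by linarith
    then show ?thesis unfolding list_decode_nonzero[OF False] by simp
  qed simp
qed

lemma set_list_decode:
  "x \<in> set (list_decode n) \<longleftrightarrow> (\<exists>i<n. (tl_code ^^ i) n \<noteq> 0 \<and> x = hd_code ((tl_code ^^ i) n))"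
proof
  assume "x \<in> set (list_decode n)"
  then obtain i where "i < length (list_decode n)" "x = list_decode n ! i"
    by (auto simp: in_set_conv_nth)
  then show "\<exists>i<n. (tl_code ^^ i) n \<noteq> 0 \<and> x = hd_code ((tl_code ^^ i) n)"
    using nth_list_decode[of i n] length_list_decode_le[of n] by (intro exI[of _ i]) auto
next
  assume "\<exists>i<n. (tl_code ^^ i) n \<noteq> 0 \<and> x = hd_code ((tl_code ^^ i) n)"
  then obtain i where "(tl_code ^^ i) n \<noteq> 0" "x = hd_code ((tl_code ^^ i) n)" by blast
  then show "x \<in> set (list_decode n)"
    using nth_list_decode[of i n] by (auto simp: in_set_conv_nth)
qed

lemma arg_simps [simp]:
  "arg [] i = 0" "arg (x # xs) 0 = x" "arg (x # xs) (Suc i) = arg xs i" "arg (x # xs) 1 = arg xs 0"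
  "arg (x # xs) (numeral k) = arg xs (pred_numeral k)" "arg (drop n xs) i = arg xs (n + i)"
  by (auto simp: arg_def numeral_eq_Suc)

definition nth_code :: "nat \<Rightarrow> nat \<Rightarrow> nat" where
  "nth_code n i = hd_code ((tl_code ^^ i) n)"

lemma arg_list_decode: "arg (list_decode n) i = nth_code n i"
  using nth_list_decode[of i n] by (auto simp: arg_def nth_code_def)

lemma nth_code_list_encode [simp]: "nth_code (list_encode xs) i = arg xs i"
  using arg_list_decode[of "list_encode xs" i] by simp

lemma nth_code_0 [simp]: "nth_code n 0 = hd_code n"
  by (simp add: nth_code_def)

lemma list_decode_cons_code [simp]: "list_decode (cons_code x n) = x # list_decode n"
  using list_decode_nonzero[of "cons_code x n"] by simp

lemma list_decode_tl_code: "list_decode (tl_code n) = drop 1 (list_decode n)"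
  by (cases "n = 0") (simp_all add: list_decode_nonzero)

lemma hd_code_list_encode [simp]: "hd_code (list_encode xs) = arg xs 0"
  and tl_code_list_encode [simp]: "tl_code (list_encode xs) = list_encode (drop 1 xs)"
  by (cases xs; simp)+

primrec encode :: "rf \<Rightarrow> nat" where
  "encode Zero = 0"
| "encode Succ = cons_code 0 0"
| "encode (Proj i) = cons_code 1 i"
| "encode (Comp f gs) = cons_code 2 (prod_encode (encode f, list_encode (map encode gs)))"
| "encode (PrimRec f g) = cons_code 3 (prod_encode (encode f, encode g))"
| "encode (Mu f) = cons_code 4 (encode f)"
| "encode Oracle = cons_code 5 0"

lemma decode_list_eq_map: "decode_list n = map decode (list_decode n)"
proof (induction n rule: less_induct)
  case (less n)
  show ?case
  proof (cases n)
    case (Suc m)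
    have "snd (prod_decode m) < n" using Suc pd2[of n] by simp
    then show ?thesis
      using less.IH[of "snd (prod_decode m)"] Suc
      by (subst decode_list.simps) (simp add: case_prod_beta)
  qed (simp add: decode_list.simps)
qed

lemma decode_nonzero:
  assumes "e \<noteq> 0"
  shows "decode e =
    (if hd_code e = 0 then Succ
     else if hd_code e = 1 then Proj (tl_code e)
     else if hd_code e = 2 then
       Comp (decode (fst (prod_decode (tl_code e)))) (decode_list (snd (prod_decode (tl_code e))))
     else if hd_code e = 3 then
       PrimRec (decode (fst (prod_decode (tl_code e)))) (decode (snd (prod_decode (tl_code e))))
     else if hd_code e = 4 then Mu (decode (tl_code e))
     else Oracle)"
  using assms by (subst decode.simps) (simp add: hd_code_def tl_code_def Let_def)

lemma decode_encode [simp]: "decode (encode p) = p"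
proof (induction p)
  case (Comp f gs)
  then have "map decode (map encode gs) = gs" by (induction gs) auto
  with Comp.IH(1) show ?case by (simp add: decode_nonzero decode_list_eq_map)
qed (simp_all add: decode_nonzero decode.simps[of 0])

lemma decode_eq_cases:
  "decode e = Zero \<Longrightarrow> e = 0"
  "decode e = Succ \<Longrightarrow> e \<noteq> 0 \<and> hd_code e = 0"
  "decode e = Proj i \<Longrightarrow> e \<noteq> 0 \<and> hd_code e = 1 \<and> tl_code e = i"
  "decode e = Comp f gs \<Longrightarrow> e \<noteq> 0 \<and> hd_code e = 2 \<and>
     decode (fst (prod_decode (tl_code e))) = f \<and> decode_list (snd (prod_decode (tl_code e))) = gs"
  "decode e = PrimRec f g \<Longrightarrow> e \<noteq> 0 \<and> hd_code e = 3 \<and>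
     decode (fst (prod_decode (tl_code e))) = f \<and> decode (snd (prod_decode (tl_code e))) = g"
  "decode e = Mu f \<Longrightarrow> e \<noteq> 0 \<and> hd_code e = 4 \<and> decode (tl_code e) = f"
  "decode e = Oracle \<Longrightarrow> e \<noteq> 0 \<and> 4 < hd_code e"
  by (cases "e = 0"; simp add: decode_nonzero decode.simps[of 0] split: if_splits)+

lemma decode_list_eq_Nil: "decode_list l = [] \<Longrightarrow> l = 0"
  by (cases "l = 0") (simp_all add: decode_list_eq_map list_decode_nonzero)

lemma decode_list_eq_Cons:
  "decode_list l = g # gs \<Longrightarrow> l \<noteq> 0 \<and> decode (hd_code l) = g \<and> decode_list (tl_code l) = gs"
  by (cases "l = 0") (simp_all add: decode_list_eq_map list_decode_nonzero)

lemma program_code_less: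
  assumes "e \<noteq> 0"
  shows "fst (prod_decode (tl_code e)) < e" and "snd (prod_decode (tl_code e)) < e"
  using prod_decode_fst_le[of "tl_code e"] prod_decode_snd_le[of "tl_code e"] tl_code_less[OF assms]
  by linarith+

section \<open>Evaluation\<close>

inductive_simps ev_Zero_iff [simp]: "ev orc Zero xs y"
inductive_simps ev_Succ_iff [simp]: "ev orc Succ xs y"
inductive_simps ev_Proj_iff [simp]: "ev orc (Proj i) xs y"
inductive_simps ev_Comp_iff [simp]: "ev orc (Comp f gs) xs y"
inductive_simps ev_Oracle_iff [simp]: "ev orc Oracle xs y"
inductive_simps ev_PrimRec_iff: "ev orc (PrimRec f g) xs y"
inductive_simps ev_Mu_iff: "ev orc (Mu f) xs y"
inductive_cases ev_PrimRecE: "ev orc (PrimRec f g) xs y"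

lemma list_all2_functional:
  assumes "list_all2 (\<lambda>x y. P x y \<and> (\<forall>y'. P x y' \<longrightarrow> y = y')) xs ys" "list_all2 P xs ys'"
  shows "ys = ys'"
  using assms
proof (induction xs arbitrary: ys ys')
  case (Cons x xs)
  then show ?case by (cases ys; cases ys'; auto)
qed simp

lemma ev_deterministic: "ev orc p xs y \<Longrightarrow> ev orc p xs y' \<Longrightarrow> y = y'"
proof (induction arbitrary: y' rule: ev.induct)
  case (ev_Comp xs gs ys f z)
  from ev_Comp.prems obtain ys' where ys': "list_all2 (\<lambda>g. ev orc g xs) gs ys'" "ev orc f ys' y'"
    by auto
  have "list_all2 (\<lambda>g y. ev orc g xs y \<and> (\<forall>y'. ev orc g xs y' \<longrightarrow> y = y')) gs ys"
    using ev_Comp(1) by (rule list_all2_mono) simp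
  then have "ys = ys'" using ys'(1) by (rule list_all2_functional)
  with ys'(2) have "ev orc f ys y'" by simp
  then show ?case by (rule ev_Comp.IH)
next
  case (ev_PrimRec0 xs f y g)
  from ev_PrimRec0.prems ev_PrimRec0.hyps(1) have "ev orc f (drop 1 xs) y'"
    by (auto elim: ev_PrimRecE)
  then show ?case by (rule ev_PrimRec0.IH)
next
  case (ev_PrimRecS xs n f g y z)
  from ev_PrimRecS.prems ev_PrimRecS(1) obtain y2 where
    y2: "ev orc (PrimRec f g) (n # drop 1 xs) y2" "ev orc g (y2 # n # drop 1 xs) y'"
    by (auto elim: ev_PrimRecE)
  from y2(1) have "y = y2" by (rule ev_PrimRecS.IH(1))
  with y2(2) have "ev orc g (y # n # drop 1 xs) y'" by simp
  then show ?case by (rule ev_PrimRecS.IH(2))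
next
  case (ev_Mu f n xs)
  from ev_Mu.prems have y': "ev orc f (y' # xs) 0" "\<forall>m<y'. \<exists>k. ev orc f (m # xs) (Suc k)"
    by (auto simp: ev_Mu_iff)
  show ?case
  proof (rule linorder_cases[of n y'])
    assume "n < y'"
    with y'(2) obtain k where "ev orc f (n # xs) (Suc k)" by blast
    with ev_Mu.IH(1) show ?thesis by blast
  next
    assume "y' < n"
    with ev_Mu.IH(2) obtain k where "\<forall>z. ev orc f (y' # xs) z \<longrightarrow> Suc k = z" by blast
    with y'(1) show ?thesis by blast
  qed
qed simp_all

lemma ev_map_le: "ev orc p xs y \<Longrightarrow> orc \<subseteq>\<^sub>m orc' \<Longrightarrow> ev orc' p xs y"
proof (induction rule: ev.induct)
  case (ev_Comp xs gs ys f z)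
  then show ?case by (auto intro!: ev.ev_Comp elim: list_all2_mono)
next
  case (ev_Mu f n xs)
  then show ?case by (auto intro!: ev.ev_Mu)
next
  case (ev_Oracle xs y)
  then show ?case by (auto simp: map_le_def dom_def)
qed (auto intro: ev.intros)

lemma Phi_eq_Some_iff: "Phi e orc n = Some y \<longleftrightarrow> ev orc (decode e) [n] y"
  unfolding Phi_def using ev_deterministic by (auto intro: theI2)

lemma Phi_map_le:
  assumes "orc \<subseteq>\<^sub>m orc'"
  shows "Phi e orc \<subseteq>\<^sub>m Phi e orc'"
  unfolding map_le_def
proof
  fix n
  assume "n \<in> dom (Phi e orc)"
  then obtain y where "Phi e orc n = Some y" by auto
  moreover from this have "Phi e orc' n = Some y"
    using ev_map_le[OF _ assms] by (simp add: Phi_eq_Some_iff)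
  ultimately show "Phi e orc n = Phi e orc' n" by simp
qed

lemma pjoin_map_le: "g \<subseteq>\<^sub>m g' \<Longrightarrow> h \<subseteq>\<^sub>m h' \<Longrightarrow> pjoin g h \<subseteq>\<^sub>m pjoin g' h'"
  unfolding map_le_def pjoin_def by (auto simp: dom_def)

lemma B_app_map_le: "h \<subseteq>\<^sub>m h' \<Longrightarrow> B_app g h \<subseteq>\<^sub>m B_app g h'"
  unfolding B_app_def by (auto split: option.split intro!: Phi_map_le pjoin_map_le)

section \<open>Relativising to a reduction\<close>

primrec subst_oracle :: "rf \<Rightarrow> rf \<Rightarrow> rf" where
  "subst_oracle q Zero = Zero"
| "subst_oracle q Succ = Succ"
| "subst_oracle q (Proj i) = Proj i"
| "subst_oracle q (Comp f gs) = Comp (subst_oracle q f) (map (subst_oracle q) gs)"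
| "subst_oracle q (PrimRec f g) = PrimRec (subst_oracle q f) (subst_oracle q g)"
| "subst_oracle q (Mu f) = Mu (subst_oracle q f)"
| "subst_oracle q Oracle = Comp q [Proj 0]"

lemma ev_subst_oracle:
  assumes "\<And>m y. orc m = Some y \<Longrightarrow> ev orc' q [m] y"
  shows "ev orc p xs y \<Longrightarrow> ev orc' (subst_oracle q p) xs y"
proof (induction rule: ev.induct)
  case (ev_Comp xs gs ys f z)
  then show ?case by (auto simp: list_all2_map1 elim: list_all2_mono)
next
  case (ev_Mu f n xs)
  then show ?case by (auto intro!: ev.ev_Mu)
next
  case (ev_Oracle xs y)
  then show ?case using assms by (auto intro!: exI[of _ "[arg xs 0]"])
qed (auto intro: ev.intros)

lemma Phi_subst_oracle:
  assumes "\<And>m y. orc m = Some y \<Longrightarrow> ev orc' q [m] y" "Phi e orc n = Some y"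
  shows "Phi (encode (subst_oracle q (decode e))) orc' n = Some y"
  using ev_subst_oracle[OF assms(1)] assms(2) by (simp add: Phi_eq_Some_iff)

lemma B_app_Some_comp:
  assumes "K2_app a a' = Some c"
  shows "B_app (Some \<circ> a) (Some \<circ> a') = Some \<circ> c"
proof -
  let ?r = "Phi (a 0) (pjoin (Some \<circ> a) (Some \<circ> a'))"
  from assms have "\<forall>n. ?r n \<noteq> None" and "c = (\<lambda>n. the (?r n))"
    unfolding K2_app_def Let_def by (auto split: if_splits)
  then have "?r = Some \<circ> c" by (auto simp: fun_eq_iff)
  then show ?thesis by (simp add: B_app_def)
qed

lemma embedding_if_turing_le:
  assumes "turing_le X Y"
  shows "embedding_K2_B X Y (\<lambda>g. Some \<circ> g)"
  unfolding embedding_K2_B_def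
proof (intro conjI)
  from assms obtain e0 where "\<And>n. Phi e0 (Some \<circ> chi Y) n = Some (chi X n)"
    unfolding turing_le_def K2_rel_def by auto
  then have e0: "(Some \<circ> chi X) m = Some y \<Longrightarrow> ev (Some \<circ> chi Y) (decode e0) [m] y" for m y
    by (auto simp: Phi_eq_Some_iff[symmetric])
  show "(\<lambda>g. Some \<circ> g) ` K2_rel X \<subseteq> B_rel Y"
  proof
    fix h assume "h \<in> (\<lambda>g. Some \<circ> g) ` K2_rel X"
    then obtain g e where h: "h = Some \<circ> g" and e: "\<And>n. Phi e (Some \<circ> chi X) n = Some (g n)"
      unfolding K2_rel_def by auto
    have "Phi (encode (subst_oracle (decode e0) (decode e))) (Some \<circ> chi Y) = h"
      using Phi_subst_oracle[OF e0 e] by (auto simp: h fun_eq_iff)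
    then show "h \<in> B_rel Y" unfolding B_rel_def by blast
  qed
qed (auto simp: inj_on_def fun_eq_iff dest: B_app_Some_comp)

section \<open>Computable functions\<close>

definition computes :: "(nat \<Rightarrow> nat option) \<Rightarrow> rf \<Rightarrow> (nat list \<Rightarrow> nat) \<Rightarrow> bool" where
  "computes orc p F \<longleftrightarrow> (\<forall>xs y. ev orc p xs y \<longleftrightarrow> y = F xs)"

definition computable :: "(nat \<Rightarrow> nat option) \<Rightarrow> (nat list \<Rightarrow> nat) \<Rightarrow> bool" where
  "computable orc F \<longleftrightarrow> (\<exists>p. computes orc p F)"

named_theorems computable_intros

lemma computes_cong: "computes orc p F \<Longrightarrow> (\<And>xs. F xs = G xs) \<Longrightarrow> computes orc p G"
  unfolding computes_def by auto

lemma computes_Zero: "computes orc Zero (\<lambda>_. 0)"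
  and computes_Succ: "computes orc Succ (\<lambda>xs. Suc (arg xs 0))"
  and computes_Proj: "computes orc (Proj i) (\<lambda>xs. arg xs i)"
  and computes_Oracle: "computes (Some \<circ> g) Oracle (\<lambda>xs. g (arg xs 0))"
  unfolding computes_def by auto

lemma list_all2_computes_ev:
  assumes "list_all2 (computes orc) gs Gs"
  shows "list_all2 (\<lambda>g y. ev orc g xs y) gs ys \<longleftrightarrow> ys = map (\<lambda>G. G xs) Gs"
  using assms
proof (induction gs arbitrary: Gs ys)
  case (Cons g gs)
  then obtain G Gs' where "Gs = G # Gs'" "computes orc g G" "list_all2 (computes orc) gs Gs'"
    by (auto simp: list_all2_Cons1)
  moreover from this(3) have "list_all2 (\<lambda>g y. ev orc g xs y) gs zs \<longleftrightarrow> zs = map (\<lambda>G. G xs) Gs'"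
    for zs by (rule Cons.IH)
  ultimately show ?case by (cases ys) (auto simp: computes_def)
qed simp

lemma computes_Comp:
  "computes orc f F \<Longrightarrow> list_all2 (computes orc) gs Gs \<Longrightarrow>
    computes orc (Comp f gs) (\<lambda>xs. F (map (\<lambda>G. G xs) Gs))"
  using list_all2_computes_ev unfolding computes_def by simp

lemma computes_Comp1:
  "computes orc f F \<Longrightarrow> computes orc g G \<Longrightarrow> computes orc (Comp f [g]) (\<lambda>xs. F [G xs])"
  using computes_Comp[of orc f F "[g]" "[G]"] by simp

lemma computes_PrimRec:
  assumes f: "computes orc f F" and g: "computes orc g G"
    and H: "\<And>r. H 0 r = F r" "\<And>n r. H (Suc n) r = G (H n r # n # r)"
  shows "computes orc (PrimRec f g) (\<lambda>xs. H (arg xs 0) (drop 1 xs))"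
proof -
  have "ev orc (PrimRec f g) xs y \<longleftrightarrow> y = H n (drop 1 xs)" if "arg xs 0 = n" for n xs y
    using that
  proof (induction n arbitrary: xs y)
    case 0
    then show ?case using f H by (subst ev_PrimRec_iff) (auto simp: computes_def)
  next
    case (Suc n)
    then show ?case using g H by (subst ev_PrimRec_iff) (auto simp: computes_def)
  qed
  then show ?thesis unfolding computes_def by auto
qed

lemma ev_Mu_computes:
  "computes orc p F \<Longrightarrow> ev orc (Mu p) xs n \<longleftrightarrow> F (n # xs) = 0 \<and> (\<forall>m<n. F (m # xs) \<noteq> 0)"
  unfolding computes_def ev_Mu_iff by (metis not0_implies_Suc old.nat.distinct(1))

lemma Phi_encode: "computes orc p F \<Longrightarrow> Phi (encode p) orc n = Some (F [n])"
  by (simp add: Phi_eq_Some_iff computes_def)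

lemma computable_cong: "computable orc F \<Longrightarrow> (\<And>xs. F xs = G xs) \<Longrightarrow> computable orc G"
  unfolding computable_def using computes_cong by blast

lemma computable_compose:
  assumes "computable orc F" "\<forall>G\<in>set Gs. computable orc G"
  shows "computable orc (\<lambda>xs. F (map (\<lambda>G. G xs) Gs))"
proof -
  from assms(2) have "\<exists>gs. list_all2 (computes orc) gs Gs"
  proof (induction Gs)
    case (Cons G Gs)
    then obtain g gs where "computes orc g G" "list_all2 (computes orc) gs Gs"
      by (auto simp: computable_def)
    then show ?case by (intro exI[of _ "g # gs"]) simp
  qed simp
  with assms(1) show ?thesis unfolding computable_def by (blast intro: computes_Comp)
qed

lemma computable_compose1:
  "computable orc (\<lambda>ys. h (arg ys 0)) \<Longrightarrow> computable orc A \<Longrightarrow> computable orc (\<lambda>xs. h (A xs))"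
  using computable_compose[of orc "\<lambda>ys. h (arg ys 0)" "[A]"] by simp

lemma computable_compose2:
  "computable orc (\<lambda>ys. h (arg ys 0) (arg ys 1)) \<Longrightarrow> computable orc A \<Longrightarrow> computable orc B \<Longrightarrow>
    computable orc (\<lambda>xs. h (A xs) (B xs))"
  using computable_compose[of orc "\<lambda>ys. h (arg ys 0) (arg ys 1)" "[A, B]"] by simp

lemma computable_compose3:
  "computable orc (\<lambda>ys. h (arg ys 0) (arg ys 1) (arg ys 2)) \<Longrightarrow>
    computable orc A \<Longrightarrow> computable orc B \<Longrightarrow> computable orc C \<Longrightarrow>
    computable orc (\<lambda>xs. h (A xs) (B xs) (C xs))"
  using computable_compose[of orc "\<lambda>ys. h (arg ys 0) (arg ys 1) (arg ys 2)" "[A, B, C]"] by simp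

lemma computable_arg [computable_intros]: "computable orc (\<lambda>xs. arg xs i)"
  unfolding computable_def using computes_Proj by blast

lemma computable_Suc [computable_intros]: "computable orc A \<Longrightarrow> computable orc (\<lambda>xs. Suc (A xs))"
  by (rule computable_compose1[of _ Suc]) (use computes_Succ computable_def in blast)

lemma computable_oracle [computable_intros]:
  "computable (Some \<circ> g) A \<Longrightarrow> computable (Some \<circ> g) (\<lambda>xs. g (A xs))"
  by (rule computable_compose1[of _ g]) (use computes_Oracle computable_def in blast)

lemma computable_const [computable_intros]: "computable orc (\<lambda>_. n)"
proof (induction n)
  case 0
  then show ?case using computes_Zero computable_def by blast
next
  case (Suc n)
  then show ?case by (rule computable_Suc)
qed

lemma computable_prim_rec:
  assumes "computable orc F" "computable orc G"
    and "\<And>r. H 0 r = F r" "\<And>n r. H (Suc n) r = G (H n r # n # r)"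
  shows "computable orc (\<lambda>xs. H (arg xs 0) (drop 1 xs))"
proof -
  from assms(1,2) obtain f g where "computes orc f F" "computes orc g G"
    unfolding computable_def by blast
  from computes_PrimRec[OF this assms(3,4)] show ?thesis unfolding computable_def by blast
qed

lemma computable_pred: "computable orc (\<lambda>xs. arg xs 0 - 1)"
proof -
  have "computable orc (\<lambda>xs. (\<lambda>n r. n - 1) (arg xs 0) (drop 1 xs))"
    by (rule computable_prim_rec[OF computable_const computable_arg[of _ 1]]) simp_all
  then show ?thesis by simp
qed

lemma computable_add [computable_intros]:
  assumes "computable orc A" "computable orc B"
  shows "computable orc (\<lambda>xs. A xs + B xs)"
proof -
  have "computable orc (\<lambda>xs. (\<lambda>n r. n + arg r 0) (arg xs 0) (drop 1 xs))"
    by (rule computable_prim_rec[OF computable_arg computable_Suc[OF computable_arg[of _ 0]]])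
      simp_all
  then have "computable orc (\<lambda>xs. arg xs 0 + arg xs 1)" by simp
  from computable_compose2[OF this assms] show ?thesis .
qed

lemma computable_minus [computable_intros]:
  assumes "computable orc A" "computable orc B"
  shows "computable orc (\<lambda>xs. A xs - B xs)"
proof -
  have "computable orc (\<lambda>xs. (\<lambda>n r. arg r 0 - n) (arg xs 0) (drop 1 xs))"
    by (rule computable_prim_rec[OF computable_arg computable_pred]) simp_all
  then have "computable orc (\<lambda>xs. arg xs 1 - arg xs 0)" by simp
  then have "computable orc (\<lambda>ys. arg ys 0 - arg ys 1)"
    using computable_compose2[of orc "\<lambda>a b. b - a" "\<lambda>ys. arg ys 1" "\<lambda>ys. arg ys 0"]
    by (simp add: computable_intros)
  from computable_compose2[OF this assms] show ?thesis .
qed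

lemma computable_mult [computable_intros]:
  assumes "computable orc A" "computable orc B"
  shows "computable orc (\<lambda>xs. A xs * B xs)"
proof -
  have "computable orc (\<lambda>xs. (\<lambda>n r. n * arg r 0) (arg xs 0) (drop 1 xs))"
    by (rule computable_prim_rec[OF computable_const
          computable_add[OF computable_arg[of _ 2] computable_arg[of _ 0]]]) simp_all
  then have "computable orc (\<lambda>xs. arg xs 0 * arg xs 1)" by simp
  from computable_compose2[OF this assms] show ?thesis .
qed

lemma computable_if [computable_intros]:
  assumes "computable orc (\<lambda>xs. of_bool (P xs))" "computable orc A" "computable orc B"
  shows "computable orc (\<lambda>xs. if P xs then A xs else B xs)"
proof (rule computable_cong)
  show "computable orc (\<lambda>xs. of_bool (P xs) * A xs + (1 - of_bool (P xs)) * B xs)"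
    by (intro computable_intros assms)
qed simp

lemma computable_of_bool_eq [computable_intros]:
  assumes "computable orc A" "computable orc B"
  shows "computable orc (\<lambda>xs. of_bool (A xs = B xs))"
proof (rule computable_cong)
  show "computable orc (\<lambda>xs. 1 - ((A xs - B xs) + (B xs - A xs)))"
    by (intro computable_intros assms)
qed simp

lemma computable_of_bool_le [computable_intros]:
  assumes "computable orc A" "computable orc B"
  shows "computable orc (\<lambda>xs. of_bool (A xs \<le> B xs))"
proof (rule computable_cong)
  show "computable orc (\<lambda>xs. 1 - (A xs - B xs))"
    by (intro computable_intros assms)
qed simp

lemma computable_of_bool_Not [computable_intros]:
  assumes "computable orc (\<lambda>xs. of_bool (P xs))"
  shows "computable orc (\<lambda>xs. of_bool (\<not> P xs))"
proof (rule computable_cong)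
  show "computable orc (\<lambda>xs. 1 - of_bool (P xs))"
    by (intro computable_intros assms)
qed simp

lemma computable_of_bool_conj [computable_intros]:
  assumes "computable orc (\<lambda>xs. of_bool (P xs))" "computable orc (\<lambda>xs. of_bool (Q xs))"
  shows "computable orc (\<lambda>xs. of_bool (P xs \<and> Q xs))"
proof (rule computable_cong)
  show "computable orc (\<lambda>xs. of_bool (P xs) * of_bool (Q xs))"
    by (intro computable_intros assms)
qed simp

lemma computable_of_bool_disj [computable_intros]:
  assumes "computable orc (\<lambda>xs. of_bool (P xs))" "computable orc (\<lambda>xs. of_bool (Q xs))"
  shows "computable orc (\<lambda>xs. of_bool (P xs \<or> Q xs))"
proof (rule computable_cong)
  show "computable orc (\<lambda>xs. of_bool (\<not> (\<not> P xs \<and> \<not> Q xs)))"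
    by (intro computable_intros assms)
qed simp

lemma computable_of_bool_if [computable_intros]:
  assumes "computable orc (\<lambda>xs. of_bool (P xs))"
    "computable orc (\<lambda>xs. of_bool (Q xs))" "computable orc (\<lambda>xs. of_bool (R xs))"
  shows "computable orc (\<lambda>xs. of_bool (if P xs then Q xs else R xs))"
proof (rule computable_cong)
  show "computable orc (\<lambda>xs. if P xs then of_bool (Q xs) else of_bool (R xs))"
    by (intro computable_intros assms)
qed simp

lemma computable_mod2 [computable_intros]:
  assumes "computable orc A"
  shows "computable orc (\<lambda>xs. A xs mod 2)"
proof -
  have "computable orc (\<lambda>xs. (\<lambda>n r. n mod 2) (arg xs 0) (drop 1 xs))"
    by (rule computable_prim_rec[OF computable_const
          computable_minus[OF computable_const[of _ 1] computable_arg[of _ 0]]])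
      (simp_all add: mod_Suc)
  then have "computable orc (\<lambda>xs. arg xs 0 mod 2)" by simp
  from computable_compose1[OF this assms] show ?thesis .
qed

lemma computable_div2 [computable_intros]:
  assumes "computable orc A"
  shows "computable orc (\<lambda>xs. A xs div 2)"
proof -
  have "computable orc (\<lambda>xs. (\<lambda>n r. n div 2) (arg xs 0) (drop 1 xs))"
    by (rule computable_prim_rec[OF computable_const
          computable_add[OF computable_arg[of _ 0] computable_mod2[OF computable_arg[of _ 1]]]])
      (simp_all add: div_Suc mod_Suc)
  then have "computable orc (\<lambda>xs. arg xs 0 div 2)" by simp
  from computable_compose1[OF this assms] show ?thesis .
qed

lemma computable_triangle [computable_intros]:
  assumes "computable orc A"
  shows "computable orc (\<lambda>xs. triangle (A xs))"
proof -
  have "computable orc (\<lambda>xs. (\<lambda>n r. triangle n) (arg xs 0) (drop 1 xs))"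
    by (rule computable_prim_rec[OF computable_const
          computable_add[OF computable_arg[of _ 0] computable_Suc[OF computable_arg[of _ 1]]]])
      simp_all
  then have "computable orc (\<lambda>xs. triangle (arg xs 0))" by simp
  from computable_compose1[OF this assms] show ?thesis .
qed

lemma computable_prod_encode [computable_intros]:
  assumes "computable orc A" "computable orc B"
  shows "computable orc (\<lambda>xs. prod_encode (A xs, B xs))"
proof (rule computable_cong)
  show "computable orc (\<lambda>xs. triangle (A xs + B xs) + A xs)"
    by (intro computable_intros assms)
qed (simp add: prod_encode_def)

fun triangle_root :: "nat \<Rightarrow> nat" where
  "triangle_root 0 = 0"
| "triangle_root (Suc n) =
    (if triangle (Suc (triangle_root n)) \<le> Suc n then Suc (triangle_root n) else triangle_root n)"

lemma triangle_root_bounds: "triangle (triangle_root n) \<le> n \<and> n < triangle (Suc (triangle_root n))"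
  by (induction n) auto

lemma prod_decode_triangle_root:
  "prod_decode n =
    (n - triangle (triangle_root n), triangle_root n - (n - triangle (triangle_root n)))"
proof -
  define r a where "r = triangle_root n" and "a = n - triangle r"
  have "triangle r \<le> n" "n < triangle (Suc r)"
    using triangle_root_bounds[of n] by (simp_all add: r_def)
  then have "prod_encode (a, r - a) = n" by (simp add: prod_encode_def a_def)
  then show ?thesis by (metis prod_encode_inverse a_def r_def)
qed

lemma computable_triangle_root: "computable orc (\<lambda>xs. triangle_root (arg xs 0))"
proof -
  have "computable orc
      (\<lambda>ys. if triangle (Suc (arg ys 0)) \<le> Suc (arg ys 1) then Suc (arg ys 0) else arg ys 0)"
    by (intro computable_intros)
  then have "computable orc (\<lambda>xs. (\<lambda>n r. triangle_root n) (arg xs 0) (drop 1 xs))"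
    by (rule computable_prim_rec[OF computable_const]) simp_all
  then show ?thesis by simp
qed

lemma computable_prod_decode [computable_intros]:
  assumes "computable orc A"
  shows "computable orc (\<lambda>xs. fst (prod_decode (A xs)))"
    and "computable orc (\<lambda>xs. snd (prod_decode (A xs)))"
proof -
  have r: "computable orc (\<lambda>xs. triangle_root (A xs))"
    by (rule computable_compose1[OF computable_triangle_root assms])
  show "computable orc (\<lambda>xs. fst (prod_decode (A xs)))"
    by (rule computable_cong[where F="\<lambda>xs. A xs - triangle (triangle_root (A xs))"])
      (intro computable_intros assms r, subst prod_decode_triangle_root, simp)
  show "computable orc (\<lambda>xs. snd (prod_decode (A xs)))"
    by (rule computable_cong[where
          F="\<lambda>xs. triangle_root (A xs) - (A xs - triangle (triangle_root (A xs)))"])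
      (intro computable_intros assms r, subst prod_decode_triangle_root, simp)
qed

lemma computable_hd_code [computable_intros]:
  "computable orc A \<Longrightarrow> computable orc (\<lambda>xs. hd_code (A xs))"
  unfolding hd_code_def by (intro computable_intros)

lemma computable_tl_code [computable_intros]:
  "computable orc A \<Longrightarrow> computable orc (\<lambda>xs. tl_code (A xs))"
  unfolding tl_code_def by (intro computable_intros)

lemma computable_cons_code [computable_intros]:
  "computable orc A \<Longrightarrow> computable orc B \<Longrightarrow> computable orc (\<lambda>xs. cons_code (A xs) (B xs))"
  unfolding cons_code_def by (intro computable_intros)

lemma computable_tl_code_funpow [computable_intros]:
  assumes "computable orc A" "computable orc B"
  shows "computable orc (\<lambda>xs. (tl_code ^^ A xs) (B xs))"
proof -
  have "computable orc (\<lambda>xs. (\<lambda>n r. (tl_code ^^ n) (arg r 0)) (arg xs 0) (drop 1 xs))"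
    by (rule computable_prim_rec[OF computable_arg computable_tl_code[OF computable_arg[of _ 0]]])
      simp_all
  then have "computable orc (\<lambda>xs. (tl_code ^^ arg xs 0) (arg xs 1))" by simp
  from computable_compose2[OF this assms] show ?thesis .
qed

text \<open>\<open>Comp\<close> passes on argument lists of fixed length, so the body may only use fixed parameters.\<close>

lemma computable_bounded_Ex:
  assumes "computable orc (\<lambda>ys. of_bool (P (arg ys 0) (arg ys 1) (arg ys 2)))"
  shows "computable orc (\<lambda>xs. of_bool (\<exists>i<arg xs 0. P i (arg xs 1) (arg xs 2)))"
proof -
  have "computable orc (\<lambda>ys. of_bool (P (arg ys 1) (arg ys 2) (arg ys 3)))"
    by (rule computable_compose3[of orc "\<lambda>a b c. of_bool (P a b c)",
          OF assms computable_arg computable_arg computable_arg])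
  then have "computable orc (\<lambda>ys. of_bool (arg ys 0 \<noteq> 0 \<or> P (arg ys 1) (arg ys 2) (arg ys 3)))"
    by (intro computable_intros)
  then have "computable orc
      (\<lambda>xs. (\<lambda>n r. of_bool (\<exists>i<n. P i (arg r 0) (arg r 1))) (arg xs 0) (drop 1 xs))"
    by (rule computable_prim_rec[OF computable_const]) (auto simp: less_Suc_eq)
  then show ?thesis by (simp add: numeral_2_eq_2)
qed

lemma computable_bounded_All:
  assumes "computable orc (\<lambda>ys. of_bool (P (arg ys 0) (arg ys 1) (arg ys 2)))"
  shows "computable orc (\<lambda>xs. of_bool (\<forall>i<arg xs 0. P i (arg xs 1) (arg xs 2)))"
proof -
  have "computable orc (\<lambda>xs. of_bool (\<not> (\<exists>i<arg xs 0. \<not> P i (arg xs 1) (arg xs 2))))"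
    by (intro computable_intros computable_bounded_Ex assms)
  then show ?thesis by simp
qed

lemma computable_Least:
  assumes "\<And>xs. \<exists>t. P t xs" and "computable orc (\<lambda>ys. of_bool (\<not> P (arg ys 0) (drop 1 ys)))"
  shows "computable orc (\<lambda>xs. LEAST t. P t xs)"
proof -
  from assms(2) obtain p where p: "computes orc p (\<lambda>ys. of_bool (\<not> P (arg ys 0) (drop 1 ys)))"
    unfolding computable_def by blast
  have "ev orc (Mu p) xs n \<longleftrightarrow> n = (LEAST t. P t xs)" for xs n
  proof -
    have "ev orc (Mu p) xs n \<longleftrightarrow> P n xs \<and> (\<forall>m<n. \<not> P m xs)"
      using ev_Mu_computes[OF p] by simp
    also have "\<dots> \<longleftrightarrow> n = (LEAST t. P t xs)"
      using assms(1)[of xs] by (metis LeastI_ex Least_le not_less_Least le_antisym not_le)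
    finally show ?thesis .
  qed
  then show ?thesis unfolding computable_def computes_def by blast
qed

lemma K2_rel_if_computable: "computable (Some \<circ> chi Y) (\<lambda>xs. g (arg xs 0)) \<Longrightarrow> g \<in> K2_rel Y"
  unfolding computable_def K2_rel_def using Phi_encode by fastforce

lemma turing_le_if_both_semidecidable:
  assumes "computable (Some \<circ> chi Y) (\<lambda>xs. of_bool (Q0 (arg xs 0) (arg xs 1)))"
    and "computable (Some \<circ> chi Y) (\<lambda>xs. of_bool (Q1 (arg xs 0) (arg xs 1)))"
    and "\<And>k. \<exists>t. Q0 t k \<or> Q1 t k"
    and "\<And>t k. Q0 t k \<Longrightarrow> k \<notin> X" and "\<And>t k. Q1 t k \<Longrightarrow> k \<in> X"
  shows "turing_le X Y"
proof -
  let ?orc = "Some \<circ> chi Y"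
  define t where "t k = (LEAST t. Q0 t k \<or> Q1 t k)" for k
  have chi: "chi X k = of_bool (Q1 (t k) k)" for k
    using LeastI_ex[OF assms(3)[of k]] assms(4,5) by (auto simp: t_def chi_def)
  have "computable ?orc (\<lambda>ys. of_bool (\<not> (Q0 (arg ys 0) (arg ys 1) \<or> Q1 (arg ys 0) (arg ys 1))))"
    by (intro computable_intros assms(1,2))
  then have "computable ?orc (\<lambda>xs. LEAST t. Q0 t (arg xs 0) \<or> Q1 t (arg xs 0))"
    by (intro computable_Least[where P="\<lambda>t xs. Q0 t (arg xs 0) \<or> Q1 t (arg xs 0)"])
      (use assms(3) in simp_all)
  then have "computable ?orc (\<lambda>xs. t (arg xs 0))" by (simp add: t_def)
  then have "computable ?orc (\<lambda>xs. of_bool (Q1 (t (arg xs 0)) (arg xs 0)))"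
    by (rule computable_compose2[of _ "\<lambda>a b. of_bool (Q1 a b)", OF assms(2) _ computable_arg])
  then show ?thesis
    unfolding turing_le_def chi[symmetric] by (rule K2_rel_if_computable)
qed

section \<open>Nested oracles and derivations\<close>

lemma context_code_less:
  assumes "c \<noteq> 0"
  shows "snd (prod_decode (hd_code c)) < c" and "snd (prod_decode (tl_code c)) < c"
  using prod_decode_snd_le[of "hd_code c"] prod_decode_snd_le[of "tl_code c"]
    hd_code_less[OF assms] tl_code_less[OF assms] by linarith+

text \<open>
  Context codes describe the oracles met when applying elements of B^Y to each other: 0 stands
  for Y, and the code of two pairs (e1, c1), (e2, c2) for the join of \<open>Phi e1\<close> and \<open>Phi e2\<close>
  computed relative to the oracles of the smaller contexts c1 and c2.
\<close>

function nested_oracle :: "nat set \<Rightarrow> nat \<Rightarrow> nat \<Rightarrow> nat option" where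
  "nested_oracle Y c =
    (if c = 0 then Some \<circ> chi Y
     else pjoin
       (Phi (fst (prod_decode (hd_code c))) (nested_oracle Y (snd (prod_decode (hd_code c)))))
       (Phi (fst (prod_decode (tl_code c))) (nested_oracle Y (snd (prod_decode (tl_code c))))))"
  by auto
termination
  by (relation "measure snd") (auto simp: context_code_less)

declare nested_oracle.simps [simp del]

definition join_context :: "nat \<Rightarrow> nat \<Rightarrow> nat \<Rightarrow> nat \<Rightarrow> nat" where
  "join_context e1 c1 e2 c2 = cons_code (prod_encode (e1, c1)) (prod_encode (e2, c2))"

lemma nested_oracle_0: "nested_oracle Y 0 = Some \<circ> chi Y"
  by (simp add: nested_oracle.simps)

lemma nested_oracle_join_context:
  "nested_oracle Y (join_context e1 c1 e2 c2) =
    pjoin (Phi e1 (nested_oracle Y c1)) (Phi e2 (nested_oracle Y c2))"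
  by (subst nested_oracle.simps) (simp add: join_context_def)

definition query_context :: "nat \<Rightarrow> nat \<Rightarrow> nat" where
  "query_context c q = (if even q then hd_code c else tl_code c)"

lemma nested_oracle_nonzero:
  assumes "c \<noteq> 0"
  shows "nested_oracle Y c q =
    Phi (fst (prod_decode (query_context c q)))
      (nested_oracle Y (snd (prod_decode (query_context c q)))) (q div 2)"
  using assms by (subst nested_oracle.simps) (simp add: pjoin_def query_context_def)

lemma query_context_less: "c \<noteq> 0 \<Longrightarrow> snd (prod_decode (query_context c q)) < c"
  using context_code_less by (simp add: query_context_def)

definition judgement :: "nat \<Rightarrow> nat \<Rightarrow> nat \<Rightarrow> nat \<Rightarrow> nat \<Rightarrow> nat" where
  "judgement k c e xs y = list_encode [k, c, e, xs, y]"

lemma judgement_eq_iff [simp]: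
  "judgement k c e xs y = judgement k' c' e' xs' y' \<longleftrightarrow> k = k' \<and> c = c' \<and> e = e' \<and> xs = xs' \<and> y = y'"
  by (simp add: judgement_def)

text \<open>
  A judgement (k, c, e, xs, y) speaks about evaluation relative to the oracle of context c on the
  argument list coded by xs. Kind 0 says that program e yields y; kind 1 that the programs
  listed in e yield the values listed in y; kind 2 that e yields nonzero values on \<open>m # xs\<close>
  for all m < y, the side condition of \<open>Mu\<close>.
\<close>

definition holds :: "nat set \<Rightarrow> nat \<Rightarrow> nat \<Rightarrow> nat \<Rightarrow> nat \<Rightarrow> nat \<Rightarrow> bool" where
  "holds Y k c e xs y \<longleftrightarrow>
    (if k = 0 then ev (nested_oracle Y c) (decode e) (list_decode xs) y
     else if k = 1 then
       list_all2 (\<lambda>g z. ev (nested_oracle Y c) g (list_decode xs) z) (decode_list e) (list_decode y)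
     else k = 2 \<and> (\<forall>m<y. \<exists>z. ev (nested_oracle Y c) (decode e) (m # list_decode xs) (Suc z)))"

text \<open>
  The derivation rules mirror those of \<open>ev\<close>; w is a witness for an intermediate value (the
  argument list of \<open>Comp\<close>, the previous value of \<open>PrimRec\<close>). A rule with fewer than two
  premises repeats its conclusion in place of the missing ones.
\<close>

definition premise1 :: "nat \<Rightarrow> nat \<Rightarrow> nat \<Rightarrow> nat \<Rightarrow> nat \<Rightarrow> nat \<Rightarrow> nat" where
  "premise1 k c e xs y w =
    (if k = 0 then
       (if e = 0 \<or> hd_code e \<le> 1 then judgement k c e xs y
        else if hd_code e = 2 then judgement 1 c (snd (prod_decode (tl_code e))) xs w
        else if hd_code e = 3 then
          (if hd_code xs = 0 then judgement 0 c (fst (prod_decode (tl_code e))) (tl_code xs) y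
           else judgement 0 c e (cons_code (hd_code xs - 1) (tl_code xs)) w)
        else if hd_code e = 4 then judgement 0 c (tl_code e) (cons_code y xs) 0
        else if c = 0 then judgement k c e xs y
        else judgement 0 (snd (prod_decode (query_context c (hd_code xs))))
          (fst (prod_decode (query_context c (hd_code xs)))) (cons_code (hd_code xs div 2) 0) y)
     else if k = 1 then
       (if e = 0 then judgement k c e xs y else judgement 0 c (hd_code e) xs (hd_code y))
     else if k = 2 then
       (if y = 0 then judgement k c e xs y else judgement 2 c e xs (y - 1))
     else judgement k c e xs y)"

definition premise2 :: "nat \<Rightarrow> nat \<Rightarrow> nat \<Rightarrow> nat \<Rightarrow> nat \<Rightarrow> nat \<Rightarrow> nat" where
  "premise2 k c e xs y w =
    (if k = 0 then
       (if e = 0 then judgement k c e xs y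
        else if hd_code e = 2 then judgement 0 c (fst (prod_decode (tl_code e))) w y
        else if hd_code e = 3 \<and> hd_code xs \<noteq> 0 then
          judgement 0 c (snd (prod_decode (tl_code e)))
            (cons_code w (cons_code (hd_code xs - 1) (tl_code xs))) y
        else if hd_code e = 4 then judgement 2 c (tl_code e) xs y
        else judgement k c e xs y)
     else if k = 1 then
       (if e = 0 then judgement k c e xs y else judgement 1 c (tl_code e) xs (tl_code y))
     else if k = 2 then
       (if y = 0 then judgement k c e xs y else judgement 0 c e (cons_code (y - 1) xs) (Suc w))
     else judgement k c e xs y)"

definition side_cond :: "nat set \<Rightarrow> nat \<Rightarrow> nat \<Rightarrow> nat \<Rightarrow> nat \<Rightarrow> nat \<Rightarrow> bool" where
  "side_cond Y k c e xs y \<longleftrightarrow>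
    (if k = 0 then
       (if e = 0 then y = 0
        else if hd_code e = 0 then y = Suc (hd_code xs)
        else if hd_code e = 1 then y = nth_code xs (tl_code e)
        else if hd_code e \<le> 4 \<or> c \<noteq> 0 then True
        else y = chi Y (hd_code xs))
     else if k = 1 then (if e = 0 then y = 0 else y \<noteq> 0)
     else k = 2)"

lemmas derivation_rule_defs = premise1_def premise2_def side_cond_def

definition judgement_order ::
    "((nat \<times> nat \<times> nat \<times> nat \<times> nat) \<times> (nat \<times> nat \<times> nat \<times> nat \<times> nat)) set" where
  "judgement_order = measures
    [\<lambda>(k, c, e, xs, y). c, \<lambda>(k, c, e, xs, y). e, \<lambda>(k, c, e, xs, y). of_bool (k = 2),
     \<lambda>(k, c, e, xs, y). if k = 2 then y else hd_code xs]"

lemma premises_decreasing: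
  assumes "premise1 k c e xs y w = judgement k' c' e' xs' y' \<or>
      premise2 k c e xs y w = judgement k' c' e' xs' y'"
    and "judgement k' c' e' xs' y' \<noteq> judgement k c e xs y"
  shows "((k', c', e', xs', y'), (k, c, e, xs, y)) \<in> judgement_order"
  using assms query_context_less program_code_less hd_code_less tl_code_less
  unfolding premise1_def premise2_def judgement_order_def
  by (auto simp: in_measures split: if_splits)

definition premises_hold :: "nat set \<Rightarrow> nat \<Rightarrow> nat \<Rightarrow> nat \<Rightarrow> nat \<Rightarrow> nat \<Rightarrow> nat \<Rightarrow> bool" where
  "premises_hold Y k c e xs y w \<longleftrightarrow>
    (\<forall>k' c' e' xs' y'.
      (premise1 k c e xs y w = judgement k' c' e' xs' y' \<or>
       premise2 k c e xs y w = judgement k' c' e' xs' y') \<and>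
      judgement k' c' e' xs' y' \<noteq> judgement k c e xs y \<longrightarrow> holds Y k' c' e' xs' y')"

lemma premises_holdD:
  "premises_hold Y k c e xs y w \<Longrightarrow>
    premise1 k c e xs y w = judgement k' c' e' xs' y' \<or>
      premise2 k c e xs y w = judgement k' c' e' xs' y' \<Longrightarrow>
    judgement k' c' e' xs' y' \<noteq> judgement k c e xs y \<Longrightarrow> holds Y k' c' e' xs' y'"
  unfolding premises_hold_def by blast

lemma ev_PrimRec_if_justified:
  assumes prem: "premises_hold Y 0 c e xs y w" and "decode e = PrimRec f g"
  shows "ev (nested_oracle Y c) (PrimRec f g) (list_decode xs) y"
proof -
  note e = decode_eq_cases(5)[OF assms(2)]
  show ?thesis
  proof (cases "hd_code xs")
    case 0
    have "holds Y 0 c (fst (prod_decode (tl_code e))) (tl_code xs) y"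
      by (rule premises_holdD[OF prem])
        (use e 0 program_code_less[of e] in \<open>simp_all add: premise1_def\<close>)
    with e 0 show ?thesis
      by (auto simp: holds_def arg_list_decode list_decode_tl_code intro: ev_PrimRec0)
  next
    case (Suc n)
    then have "cons_code n (tl_code xs) \<noteq> xs" by (metis hd_code_cons_code n_not_Suc_n)
    have "holds Y 0 c e (cons_code n (tl_code xs)) w"
      "holds Y 0 c (snd (prod_decode (tl_code e))) (cons_code w (cons_code n (tl_code xs))) y"
      by (rule premises_holdD[OF prem]; use e Suc \<open>cons_code n (tl_code xs) \<noteq> xs\<close>
          program_code_less[of e] in \<open>simp add: premise1_def premise2_def\<close>)+
    with e Suc assms(2) show ?thesis
      by (auto simp: holds_def arg_list_decode list_decode_tl_code intro: ev_PrimRecS)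
  qed
qed

lemma ev_Oracle_if_justified:
  assumes side: "side_cond Y 0 c e xs y" and prem: "premises_hold Y 0 c e xs y w"
    and "decode e = Oracle"
  shows "ev (nested_oracle Y c) Oracle (list_decode xs) y"
proof (cases "c = 0")
  case True
  with side decode_eq_cases(7)[OF assms(3)] show ?thesis
    by (simp add: side_cond_def nested_oracle_0 arg_list_decode)
next
  case False
  let ?d = "query_context c (hd_code xs)"
  have "holds Y 0 (snd (prod_decode ?d)) (fst (prod_decode ?d)) (cons_code (hd_code xs div 2) 0) y"
    by (rule premises_holdD[OF prem])
      (use decode_eq_cases(7)[OF assms(3)] False query_context_less[of c "hd_code xs"] in
        \<open>simp_all add: premise1_def\<close>)
  with False show ?thesis
    by (simp add: holds_def nested_oracle_nonzero Phi_eq_Some_iff arg_list_decode)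
qed

lemma holds_eval_if_justified:
  assumes side: "side_cond Y 0 c e xs y"
    and prem: "premises_hold Y 0 c e xs y w"
  shows "ev (nested_oracle Y c) (decode e) (list_decode xs) y"
proof (cases "decode e")
  case Zero
  with side show ?thesis by (simp add: side_cond_def decode_eq_cases(1))
next
  case Succ
  with side show ?thesis by (simp add: side_cond_def decode_eq_cases(2) arg_list_decode)
next
  case (Proj i)
  with side show ?thesis by (simp add: side_cond_def decode_eq_cases(3) arg_list_decode)
next
  case (Comp f gs)
  note e = decode_eq_cases(4)[OF this]
  have "holds Y 1 c (snd (prod_decode (tl_code e))) xs w"
    and "holds Y 0 c (fst (prod_decode (tl_code e))) w y"
    by (rule premises_holdD[OF prem];
        use e program_code_less[of e] in \<open>simp add: premise1_def premise2_def\<close>)+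
  with e show ?thesis by (auto simp: holds_def Comp)
next
  case (PrimRec f g)
  with ev_PrimRec_if_justified[OF prem this] show ?thesis by simp
next
  case (Mu f)
  note e = decode_eq_cases(6)[OF this]
  have "holds Y 0 c (tl_code e) (cons_code y xs) 0" "holds Y 2 c (tl_code e) xs y"
    by (rule premises_holdD[OF prem];
        use e tl_code_less[of e] in \<open>simp add: premise1_def premise2_def\<close>)+
  with e show ?thesis by (auto simp: holds_def Mu intro: ev_Mu)
next
  case Oracle
  with ev_Oracle_if_justified[OF side prem this] show ?thesis by simp
qed

lemma holds_if_justified:
  assumes side: "side_cond Y k c e xs y"
    and prem: "premises_hold Y k c e xs y w"
  shows "holds Y k c e xs y"
proof -
  consider "k = 0" | "k = 1" | "k = 2"
    using side unfolding side_cond_def by (cases "k = 0"; cases "k = 1") simp_all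
  then show ?thesis
  proof cases
    case 1
    from holds_eval_if_justified[OF side[unfolded 1] prem[unfolded 1]] show ?thesis
      by (simp add: 1 holds_def)
  next
    case 2
    show ?thesis
    proof (cases "e = 0")
      case True
      with side 2 show ?thesis by (simp add: side_cond_def holds_def decode_list_eq_map)
    next
      case False
      with side 2 have "y \<noteq> 0" by (simp add: side_cond_def)
      have "holds Y 0 c (hd_code e) xs (hd_code y)" "holds Y 1 c (tl_code e) xs (tl_code y)"
        by (rule premises_holdD[OF prem]; use 2 False hd_code_less[of e] tl_code_less[of e] in
            \<open>simp add: premise1_def premise2_def\<close>)+
      with 2 show ?thesis
        by (simp add: holds_def decode_list_eq_map list_decode_nonzero[OF False]
            list_decode_nonzero[OF \<open>y \<noteq> 0\<close>])
    qed
  next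
    case 3
    show ?thesis
    proof (cases y)
      case (Suc n)
      have "holds Y 2 c e xs n" "holds Y 0 c e (cons_code n xs) (Suc w)"
        by (rule premises_holdD[OF prem]; use 3 Suc in \<open>simp add: premise1_def premise2_def\<close>)+
      with 3 Suc show ?thesis by (auto simp: holds_def less_Suc_eq)
    qed (simp add: 3 holds_def)
  qed
qed

definition conclusions :: "(nat \<times> nat) list \<Rightarrow> nat set" where
  "conclusions L = fst ` set L"

definition justified :: "nat set \<Rightarrow> nat set \<Rightarrow> nat \<Rightarrow> nat \<Rightarrow> bool" where
  "justified Y S F w \<longleftrightarrow>
    (let k = nth_code F 0; c = nth_code F 1; e = nth_code F 2; xs = nth_code F 3; y = nth_code F 4
     in
     premise1 k c e xs y w \<in> S \<and> premise2 k c e xs y w \<in> S \<and> side_cond Y k c e xs y)"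

definition derivation :: "nat set \<Rightarrow> (nat \<times> nat) list \<Rightarrow> bool" where
  "derivation Y L \<longleftrightarrow> (\<forall>(F, w) \<in> set L. justified Y (conclusions L) F w)"

lemma justified_judgement:
  "justified Y S (judgement k c e xs y) w \<longleftrightarrow>
    premise1 k c e xs y w \<in> S \<and> premise2 k c e xs y w \<in> S \<and> side_cond Y k c e xs y"
  by (simp add: justified_def judgement_def nth_code_def numeral_eq_Suc)

lemma derivation_sound:
  assumes "derivation Y L"
  shows "judgement k c e xs y \<in> conclusions L \<Longrightarrow> holds Y k c e xs y"
proof (induction "(k, c, e, xs, y)" arbitrary: k c e xs y rule: wf_induct[of judgement_order])
  case 1
  show ?case by (simp add: judgement_order_def)
next
  case (2 k c e xs y)
  then obtain w where "(judgement k c e xs y, w) \<in> set L"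
    by (auto simp: conclusions_def)
  with assms have w: "premise1 k c e xs y w \<in> conclusions L" "premise2 k c e xs y w \<in> conclusions L"
    "side_cond Y k c e xs y"
    by (auto simp: derivation_def justified_judgement)
  have "premises_hold Y k c e xs y w"
    unfolding premises_hold_def
  proof (intro allI impI, elim conjE)
    fix k' c' e' xs' y'
    assume "premise1 k c e xs y w = judgement k' c' e' xs' y' \<or>
      premise2 k c e xs y w = judgement k' c' e' xs' y'"
      and "judgement k' c' e' xs' y' \<noteq> judgement k c e xs y"
    with w(1,2) premises_decreasing[OF this] show "holds Y k' c' e' xs' y'"
      using 2(1) by auto
  qed
  with w(3) show ?case by (rule holds_if_justified)
qed

definition derivable :: "nat set \<Rightarrow> nat \<Rightarrow> bool" where
  "derivable Y F \<longleftrightarrow> (\<exists>L. derivation Y L \<and> F \<in> conclusions L)"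

lemma justified_mono: "justified Y S F w \<Longrightarrow> S \<subseteq> S' \<Longrightarrow> justified Y S' F w"
  unfolding justified_def Let_def by blast

lemma derivable_by_rule:
  assumes side: "side_cond Y k c e xs y"
    and prem1: "premise1 k c e xs y w = judgement k c e xs y \<or> derivable Y (premise1 k c e xs y w)"
    and prem2: "premise2 k c e xs y w = judgement k c e xs y \<or> derivable Y (premise2 k c e xs y w)"
  shows "derivable Y (judgement k c e xs y)"
proof -
  let ?F = "judgement k c e xs y"
  have "\<exists>L. derivation Y L \<and> P \<in> insert ?F (conclusions L)" if "P = ?F \<or> derivable Y P" for P
  proof (cases "P = ?F")
    case True
    then show ?thesis by (intro exI[of _ "[]"]) (simp add: derivation_def)
  next
    case False
    with that show ?thesis unfolding derivable_def by blast
  qed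
  then obtain L1 L2 where L: "derivation Y L1" "derivation Y L2"
    and in_L: "premise1 k c e xs y w \<in> insert ?F (conclusions L1)"
      "premise2 k c e xs y w \<in> insert ?F (conclusions L2)"
    using prem1 prem2 by meson
  let ?L = "L1 @ L2 @ [(?F, w)]"
  have concl: "conclusions ?L = conclusions L1 \<union> conclusions L2 \<union> {?F}"
    by (auto simp: conclusions_def)
  have "derivation Y ?L"
    unfolding derivation_def
  proof (intro ballI, clarify)
    fix G v assume "(G, v) \<in> set ?L"
    then consider "(G, v) \<in> set L1" | "(G, v) \<in> set L2" | "G = ?F" "v = w" by auto
    then show "justified Y (conclusions ?L) G v"
    proof cases
      case 1 with L(1) show ?thesis unfolding concl derivation_def by (auto elim: justified_mono)
    next
      case 2 with L(2) show ?thesis unfolding concl derivation_def by (auto elim: justified_mono)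
    next
      case 3 with side in_L show ?thesis unfolding concl by (auto simp: justified_judgement)
    qed
  qed
  then show ?thesis unfolding derivable_def by (intro exI[of _ ?L]) (simp add: concl)
qed

lemma derivable_list:
  assumes "list_all2 (\<lambda>g z. \<forall>e. decode e = g \<longrightarrow> derivable Y (judgement 0 c e xs z)) gs zs"
    and "decode_list l = gs"
  shows "derivable Y (judgement 1 c l xs (list_encode zs))"
  using assms
proof (induction gs arbitrary: l zs)
  case Nil
  then have "l = 0" "zs = []" by (simp_all add: decode_list_eq_Nil)
  then show ?case
    by (intro derivable_by_rule[where w=0]) (simp_all add: derivation_rule_defs)
next
  case (Cons g gs)
  then obtain z zs' where zs: "zs = z # zs'" by (auto simp: list_all2_Cons1)
  note l = decode_list_eq_Cons[OF Cons.prems(2)]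
  have "derivable Y (judgement 0 c (hd_code l) xs z)" using Cons.prems(1) l zs by auto
  moreover have "derivable Y (judgement 1 c (tl_code l) xs (list_encode zs'))"
    using Cons.IH Cons.prems(1) l zs by auto
  ultimately show ?case using l zs
    by (intro derivable_by_rule[where w=0]) (simp_all add: derivation_rule_defs)
qed

lemma derivable_below:
  assumes "\<forall>m<n. \<exists>z. derivable Y (judgement 0 c e (cons_code m xs) (Suc z))"
  shows "derivable Y (judgement 2 c e xs n)"
  using assms
proof (induction n)
  case 0
  show ?case
    by (intro derivable_by_rule[where w=0]) (simp_all add: derivation_rule_defs)
next
  case (Suc n)
  then obtain z where "derivable Y (judgement 0 c e (cons_code n xs) (Suc z))" by blast
  with Suc show ?case
    by (intro derivable_by_rule[where w=z]) (simp_all add: derivation_rule_defs)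
qed

lemma derivable_oracle_query:
  assumes "decode e = Oracle" and query: "nested_oracle Y c (arg xs 0) = Some y"
    and IH: "\<And>c' e' xs' y'. c' < c \<Longrightarrow> ev (nested_oracle Y c') (decode e') xs' y' \<Longrightarrow>
      derivable Y (judgement 0 c' e' (list_encode xs') y')"
  shows "derivable Y (judgement 0 c e (list_encode xs) y)"
proof (cases "c = 0")
  case True
  with query decode_eq_cases(7)[OF assms(1)] show ?thesis
    by (intro derivable_by_rule[where w=0]) (simp_all add: derivation_rule_defs nested_oracle_0)
next
  case False
  let ?d = "query_context c (arg xs 0)"
  from query False have
    "ev (nested_oracle Y (snd (prod_decode ?d))) (decode (fst (prod_decode ?d))) [arg xs 0 div 2] y"
    by (simp add: nested_oracle_nonzero Phi_eq_Some_iff)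
  from IH[OF query_context_less[OF False] this] decode_eq_cases(7)[OF assms(1)] False show ?thesis
    by (intro derivable_by_rule[where w=0]) (simp_all add: derivation_rule_defs)
qed

lemma ev_derivable:
  "ev (nested_oracle Y c) (decode e) xs y \<Longrightarrow> derivable Y (judgement 0 c e (list_encode xs) y)"
proof (induction c arbitrary: e xs y rule: less_induct)
  case (less c)
  from less.prems show ?case
  proof (induction "decode e" xs y arbitrary: e rule: ev.induct)
    case (ev_Zero xs)
    then have "e = 0" by (simp add: decode_eq_cases(1))
    then show ?case by (intro derivable_by_rule[where w=0]) (simp_all add: derivation_rule_defs)
  next
    case (ev_Succ xs)
    then show ?case
      using decode_eq_cases(2)[OF \<open>Succ = decode e\<close>[symmetric]]
      by (intro derivable_by_rule[where w=0]) (simp_all add: derivation_rule_defs)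
  next
    case (ev_Proj i xs)
    then show ?case
      using decode_eq_cases(3)[OF \<open>Proj i = decode e\<close>[symmetric]]
      by (intro derivable_by_rule[where w=0]) (simp_all add: derivation_rule_defs)
  next
    case (ev_Comp xs gs ys f z)
    note e = decode_eq_cases(4)[OF \<open>Comp f gs = decode e\<close>[symmetric]]
    have "derivable Y
        (judgement 1 c (snd (prod_decode (tl_code e))) (list_encode xs) (list_encode ys))"
      using ev_Comp e by (intro derivable_list) (auto elim: list_all2_mono)
    with ev_Comp e show ?case
      by (intro derivable_by_rule[where w="list_encode ys"]) (simp_all add: derivation_rule_defs)
  next
    case (ev_PrimRec0 xs f y g)
    with decode_eq_cases(5)[OF \<open>PrimRec f g = decode e\<close>[symmetric]] show ?case
      by (intro derivable_by_rule[where w=0]) (simp_all add: derivation_rule_defs)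
  next
    case (ev_PrimRecS xs n f g y z)
    with decode_eq_cases(5)[OF \<open>PrimRec f g = decode e\<close>[symmetric]] show ?case
      by (intro derivable_by_rule[where w=y]) (simp_all add: derivation_rule_defs)
  next
    case (ev_Mu f n xs)
    note e = decode_eq_cases(6)[OF \<open>Mu f = decode e\<close>[symmetric]]
    have "derivable Y (judgement 2 c (tl_code e) (list_encode xs) n)"
    proof (rule derivable_below, intro allI impI)
      fix m assume "m < n"
      with ev_Mu.hyps(3) e
      show "\<exists>z. derivable Y (judgement 0 c (tl_code e) (cons_code m (list_encode xs)) (Suc z))"
        by (metis list_encode_Cons)
    qed
    with ev_Mu e show ?case
      by (intro derivable_by_rule[where w=0]) (simp_all add: derivation_rule_defs)
  next
    case (ev_Oracle xs y)
    from \<open>Oracle = decode e\<close>[symmetric] \<open>nested_oracle Y c (arg xs 0) = Some y\<close> less.IH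
    show ?case by (rule derivable_oracle_query)
  qed
qed

section \<open>Checking derivations relative to Y\<close>

definition derivation_decode :: "nat \<Rightarrow> (nat \<times> nat) list" where
  "derivation_decode t = map prod_decode (list_decode t)"

lemma derivation_decode_encode: "derivation_decode (list_encode (map prod_encode L)) = L"
  by (simp add: derivation_decode_def comp_def)

lemma conclusions_derivation_decode:
  "F \<in> conclusions (derivation_decode t) \<longleftrightarrow>
    (\<exists>i<t. (tl_code ^^ i) t \<noteq> 0 \<and> F = fst (prod_decode (hd_code ((tl_code ^^ i) t))))"
proof -
  have "F \<in> conclusions (derivation_decode t) \<longleftrightarrow> (\<exists>x\<in>set (list_decode t). F = fst (prod_decode x))"
    by (force simp: conclusions_def derivation_decode_def)
  then show ?thesis unfolding Ball_def Bex_def set_list_decode by blast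
qed

lemma derivation_derivation_decode:
  "derivation Y (derivation_decode t) \<longleftrightarrow>
    (\<forall>i<t. (tl_code ^^ i) t \<noteq> 0 \<longrightarrow>
      justified Y (conclusions (derivation_decode t))
        (fst (prod_decode (hd_code ((tl_code ^^ i) t))))
        (snd (prod_decode (hd_code ((tl_code ^^ i) t)))))"
proof -
  have "derivation Y (derivation_decode t) \<longleftrightarrow> (\<forall>x\<in>set (list_decode t).
      justified Y (conclusions (derivation_decode t)) (fst (prod_decode x)) (snd (prod_decode x)))"
    unfolding derivation_def by (simp add: derivation_decode_def case_prod_beta)
  then show ?thesis unfolding Ball_def Bex_def set_list_decode by blast
qed

lemma computable_nth_code [computable_intros]:
  "computable orc A \<Longrightarrow> computable orc B \<Longrightarrow> computable orc (\<lambda>xs. nth_code (A xs) (B xs))"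
  unfolding nth_code_def by (intro computable_intros)

lemma computable_of_bool_even [computable_intros]:
  "computable orc A \<Longrightarrow> computable orc (\<lambda>xs. of_bool (even (A xs)))"
  unfolding even_iff_mod_2_eq_zero by (intro computable_intros)

lemma computable_query_context [computable_intros]:
  "computable orc A \<Longrightarrow> computable orc B \<Longrightarrow> computable orc (\<lambda>xs. query_context (A xs) (B xs))"
  unfolding query_context_def by (intro computable_intros)

lemma computable_judgement [computable_intros]:
  "computable orc A \<Longrightarrow> computable orc B \<Longrightarrow> computable orc C \<Longrightarrow> computable orc D \<Longrightarrow> computable orc E \<Longrightarrow>
    computable orc (\<lambda>xs. judgement (A xs) (B xs) (C xs) (D xs) (E xs))"
  unfolding judgement_def by (simp, intro computable_intros)

lemma computable_premises [computable_intros]: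
  assumes "computable orc K" "computable orc C" "computable orc E" "computable orc XS"
    "computable orc Z" "computable orc W"
  shows "computable orc (\<lambda>xs. premise1 (K xs) (C xs) (E xs) (XS xs) (Z xs) (W xs))"
    and "computable orc (\<lambda>xs. premise2 (K xs) (C xs) (E xs) (XS xs) (Z xs) (W xs))"
  unfolding premise1_def premise2_def by (intro computable_intros assms)+

lemma computable_side_cond [computable_intros]:
  assumes "computable (Some \<circ> chi Y) K" "computable (Some \<circ> chi Y) C" "computable (Some \<circ> chi Y) E"
    "computable (Some \<circ> chi Y) XS" "computable (Some \<circ> chi Y) Z"
  shows "computable (Some \<circ> chi Y) (\<lambda>xs. of_bool (side_cond Y (K xs) (C xs) (E xs) (XS xs) (Z xs)))"
  unfolding side_cond_def by (intro computable_intros assms)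

lemma computable_mem_conclusions [computable_intros]:
  assumes "computable orc F" "computable orc T"
  shows "computable orc (\<lambda>xs. of_bool (F xs \<in> conclusions (derivation_decode (T xs))))"
proof -
  have "computable orc (\<lambda>ys. of_bool ((tl_code ^^ arg ys 0) (arg ys 2) \<noteq> 0 \<and>
      arg ys 1 = fst (prod_decode (hd_code ((tl_code ^^ arg ys 0) (arg ys 2))))))"
    by (intro computable_intros)
  from computable_compose3[OF computable_bounded_Ex[OF this] assms(2,1,2)] show ?thesis
    by (simp add: conclusions_derivation_decode)
qed

lemma computable_justified [computable_intros]:
  assumes "computable (Some \<circ> chi Y) T" "computable (Some \<circ> chi Y) F" "computable (Some \<circ> chi Y) W"
  shows "computable (Some \<circ> chi Y)
    (\<lambda>xs. of_bool (justified Y (conclusions (derivation_decode (T xs))) (F xs) (W xs)))"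
  unfolding justified_def Let_def by (intro computable_intros assms)

lemma computable_derivation [computable_intros]:
  assumes "computable (Some \<circ> chi Y) T"
  shows "computable (Some \<circ> chi Y) (\<lambda>xs. of_bool (derivation Y (derivation_decode (T xs))))"
proof -
  have "computable (Some \<circ> chi Y) (\<lambda>ys. of_bool ((tl_code ^^ arg ys 0) (arg ys 1) \<noteq> 0 \<longrightarrow>
      justified Y (conclusions (derivation_decode (arg ys 1)))
        (fst (prod_decode (hd_code ((tl_code ^^ arg ys 0) (arg ys 1)))))
        (snd (prod_decode (hd_code ((tl_code ^^ arg ys 0) (arg ys 1)))))))"
    unfolding imp_conv_disj by (intro computable_intros)
  from computable_compose3[OF computable_bounded_All[OF this] assms assms assms] show ?thesis
    by (simp add: derivation_derivation_decode)
qed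

definition certifies :: "nat set \<Rightarrow> nat \<Rightarrow> nat \<Rightarrow> nat \<Rightarrow> nat \<Rightarrow> nat \<Rightarrow> bool" where
  "certifies Y t c e p a \<longleftrightarrow>
    derivation Y (derivation_decode t) \<and>
    judgement 0 c e (list_encode [p]) a \<in> conclusions (derivation_decode t)"

lemma Phi_nested_oracle_eq_Some_iff:
  "Phi e (nested_oracle Y c) p = Some a \<longleftrightarrow> (\<exists>t. certifies Y t c e p a)"
proof
  assume "Phi e (nested_oracle Y c) p = Some a"
  then have "ev (nested_oracle Y c) (decode e) [p] a" by (simp add: Phi_eq_Some_iff)
  from ev_derivable[OF this] obtain L
    where "derivation Y L" "judgement 0 c e (list_encode [p]) a \<in> conclusions L"
    unfolding derivable_def by blast
  then have "certifies Y (list_encode (map prod_encode L)) c e p a"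
    by (simp only: certifies_def derivation_decode_encode)
  then show "\<exists>t. certifies Y t c e p a" ..
next
  assume "\<exists>t. certifies Y t c e p a"
  then obtain t where "derivation Y (derivation_decode t)"
    "judgement 0 c e (list_encode [p]) a \<in> conclusions (derivation_decode t)"
    unfolding certifies_def by blast
  from derivation_sound[OF this] show "Phi e (nested_oracle Y c) p = Some a"
    by (simp add: holds_def Phi_eq_Some_iff)
qed

lemma computable_certifies:
  assumes "computable (Some \<circ> chi Y) T" "computable (Some \<circ> chi Y) C"
  shows "computable (Some \<circ> chi Y) (\<lambda>xs. of_bool (certifies Y (T xs) (C xs) e p a))"
  unfolding certifies_def list_encode_Cons list_encode.simps(1) by (intro computable_intros assms)

section \<open>Elements of Kleene's second model\<close>

definition join_total :: "(nat \<Rightarrow> nat) \<Rightarrow> (nat \<Rightarrow> nat) \<Rightarrow> nat \<Rightarrow> nat" where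
  "join_total a b q = (if even q then a (q div 2) else b (q div 2))"

lemma K2_app_if_computes:
  assumes "computes (Some \<circ> join_total a b) p F" "a 0 = encode p"
  shows "K2_app a b = Some (\<lambda>n. F [n])"
proof -
  have "pjoin (Some \<circ> a) (Some \<circ> b) = Some \<circ> join_total a b"
    by (auto simp: pjoin_def join_total_def fun_eq_iff)
  with assms show ?thesis by (simp add: K2_app_def Phi_encode)
qed

lemma computes_one: "computes orc (Comp Succ [Zero]) (\<lambda>_. 1)"
  by (rule computes_cong[OF computes_Comp1[OF computes_Succ computes_Zero]]) simp

lemma computes_read_argument:
  "computes (Some \<circ> join_total a b) (Comp Oracle [Comp Succ [Zero]]) (\<lambda>_. b 0)"
  by (rule computes_cong[OF computes_Comp1[OF computes_Oracle computes_one]])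
    (simp add: join_total_def)

lemma K2_successor: "\<exists>s. \<forall>n. K2_app (\<lambda>_. s) (\<lambda>_. n) = Some (\<lambda>_. Suc n)"
proof -
  let ?p = "Comp Succ [Comp Oracle [Comp Succ [Zero]]]"
  have "computes (Some \<circ> join_total (\<lambda>_. encode ?p) (\<lambda>_. n)) ?p (\<lambda>_. Suc n)" for n
    by (rule computes_cong[OF computes_Comp1[OF computes_Succ computes_read_argument]]) simp
  then show ?thesis using K2_app_if_computes by blast
qed

lemma K2_swap: "\<exists>w. K2_app (\<lambda>_. w) (\<lambda>_. 0) = Some (\<lambda>_. 1) \<and> K2_app (\<lambda>_. w) (\<lambda>_. 1) = Some (\<lambda>_. 0)"
proof -
  let ?p = "Comp (PrimRec (Comp Succ [Zero]) Zero) [Comp Oracle [Comp Succ [Zero]]]"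
  have "computes orc (PrimRec (Comp Succ [Zero]) Zero) (\<lambda>xs. of_bool (arg xs 0 = 0))" for orc
    by (rule computes_cong[OF computes_PrimRec[OF computes_one computes_Zero]]) simp_all
  then have "computes (Some \<circ> join_total (\<lambda>_. encode ?p) (\<lambda>_. n)) ?p (\<lambda>_. of_bool (n = 0))" for n
    by (rule computes_cong[OF computes_Comp1[OF _ computes_read_argument]]) simp
  from K2_app_if_computes[OF this[of 0]] K2_app_if_computes[OF this[of 1]] show ?thesis by auto
qed

lemma K2_characteristic: "\<exists>g \<in> K2_rel X. \<forall>n. K2_app g (\<lambda>_. n) = Some (\<lambda>_. chi X n)"
proof
  let ?double = "PrimRec Zero (Comp Succ [Comp Succ [Proj 0]])"
  let ?p = "Comp Oracle [Comp ?double [Comp Succ [Comp Oracle [Comp Succ [Zero]]]]]"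
  define g where "g k = (if k = 0 then encode ?p else chi X (k - 1))" for k
  have "computes orc (Comp Succ [Comp Succ [Proj 0]]) (\<lambda>xs. Suc (Suc (arg xs 0)))" for orc
    by (rule computes_cong[OF
          computes_Comp1[OF computes_Succ computes_Comp1[OF computes_Succ computes_Proj]]])
      simp
  then have "computes orc ?double (\<lambda>xs. 2 * arg xs 0)" for orc
    by (rule computes_cong[OF computes_PrimRec[OF computes_Zero]]) simp_all
  then have p: "computes (Some \<circ> join_total g (\<lambda>_. n)) ?p (\<lambda>_. chi X n)" for n
    by (rule computes_cong[OF computes_Comp1[OF computes_Oracle computes_Comp1[OF _
            computes_Comp1[OF computes_Succ computes_read_argument]]]])
      (simp add: join_total_def g_def)
  show "\<forall>n. K2_app g (\<lambda>_. n) = Some (\<lambda>_. chi X n)"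
    using K2_app_if_computes[OF p] by (simp add: g_def)
  show "g \<in> K2_rel X"
    unfolding g_def by (intro K2_rel_if_computable computable_intros)
qed

lemma const_in_K2_rel: "(\<lambda>_. n) \<in> K2_rel X"
  by (intro K2_rel_if_computable computable_const)

section \<open>Application in B as a nested oracle\<close>

text \<open>\<open>Mu Succ\<close> diverges everywhere, as does \<open>B_app g h\<close> when \<open>g 0\<close> is undefined.\<close>

definition program_of :: "(nat \<Rightarrow> nat option) \<Rightarrow> nat" where
  "program_of g = (case g 0 of None \<Rightarrow> encode (Mu Succ) | Some e \<Rightarrow> e)"

lemma B_app_eq_Phi: "B_app g h = Phi (program_of g) (pjoin g h)"
proof (cases "g 0")
  case None
  have "Phi (encode (Mu Succ)) orc = (\<lambda>_. None)" for orc
    by (simp add: fun_eq_iff Phi_def ev_Mu_iff del: encode.simps)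
  with None show ?thesis by (simp add: B_app_def program_of_def del: encode.simps)
qed (simp add: B_app_def program_of_def)

lemma B_app_nested_oracle:
  assumes "Phi e1 (nested_oracle Y c1) = g" "Phi e2 (nested_oracle Y c2) = h"
  shows "B_app g h = Phi (program_of g) (nested_oracle Y (join_context e1 c1 e2 c2))"
  using assms by (simp add: B_app_eq_Phi nested_oracle_join_context)

definition iter_program :: "nat \<Rightarrow> nat \<Rightarrow> nat \<Rightarrow> nat" where
  "iter_program z e n = (if n = 0 then z else e)"

primrec iter_context :: "nat \<Rightarrow> nat \<Rightarrow> nat \<Rightarrow> nat \<Rightarrow> nat" where
  "iter_context s z e 0 = 0"
| "iter_context s z e (Suc n) = join_context s 0 (iter_program z e n) (iter_context s z e n)"

lemma Phi_iter_context:
  assumes "Phi s (nested_oracle Y 0) = S" "Phi z (nested_oracle Y 0) = Z"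
  shows "Phi (iter_program z (program_of S) n)
      (nested_oracle Y (iter_context s z (program_of S) n)) =
    (B_app S ^^ n) Z"
proof (induction n)
  case 0
  with assms(2) show ?case by (simp add: iter_program_def)
next
  case (Suc n)
  with assms(1) show ?case by (simp add: B_app_nested_oracle iter_program_def)
qed

lemma computable_join_context [computable_intros]:
  "computable orc A \<Longrightarrow> computable orc B \<Longrightarrow> computable orc C \<Longrightarrow> computable orc D \<Longrightarrow>
    computable orc (\<lambda>xs. join_context (A xs) (B xs) (C xs) (D xs))"
  unfolding join_context_def by (intro computable_intros)

lemma computable_iter_context: "computable orc (\<lambda>xs. iter_context s z e (arg xs 0))"
proof -
  have "computable orc (\<lambda>ys. join_context s 0 (iter_program z e (arg ys 1)) (arg ys 0))"
    unfolding iter_program_def by (intro computable_intros)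
  then have "computable orc (\<lambda>xs. (\<lambda>n r. iter_context s z e n) (arg xs 0) (drop 1 xs))"
    by (rule computable_prim_rec[OF computable_const]) simp_all
  then show ?thesis by simp
qed

lemma B_app_swap_incomparable:
  assumes "B_app w a = b" "B_app w b = a" "a \<noteq> b"
  shows "\<not> a \<subseteq>\<^sub>m b"
  using B_app_map_le[of a b w] assms map_le_antisym by auto

section \<open>Embeddings yield reductions\<close>

lemma embedding_K2_B_app:
  "embedding_K2_B X Y f \<Longrightarrow> a \<in> K2_rel X \<Longrightarrow> b \<in> K2_rel X \<Longrightarrow> K2_app a b = Some c \<Longrightarrow>
    B_app (f a) (f b) = f c"
  unfolding embedding_K2_B_def by blast

lemma embedding_K2_B_image:
  "embedding_K2_B X Y f \<Longrightarrow> a \<in> K2_rel X \<Longrightarrow> \<exists>e. Phi e (nested_oracle Y 0) = f a"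
  unfolding embedding_K2_B_def B_rel_def nested_oracle_0 by blast

lemma embedding_realizes_characteristic:
  assumes emb: "embedding_K2_B X Y f"
  shows "\<exists>e C. computable (Some \<circ> chi Y) (\<lambda>xs. C (arg xs 0)) \<and>
    (\<forall>k. Phi e (nested_oracle Y (C k)) = f (\<lambda>_. chi X k))"
proof -
  note app = embedding_K2_B_app[OF emb]
  obtain s where s: "\<And>n. K2_app (\<lambda>_. s) (\<lambda>_. n) = Some (\<lambda>_. Suc n)"
    using K2_successor by blast
  obtain g where g: "g \<in> K2_rel X" "\<And>n. K2_app g (\<lambda>_. n) = Some (\<lambda>_. chi X n)"
    using K2_characteristic by blast
  let ?S = "f (\<lambda>_. s)"
  obtain es ez eg
    where e: "Phi es (nested_oracle Y 0) = ?S" "Phi ez (nested_oracle Y 0) = f (\<lambda>_. 0)"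
    "Phi eg (nested_oracle Y 0) = f g"
    using embedding_K2_B_image[OF emb] const_in_K2_rel g(1) by meson
  have iterate: "(B_app ?S ^^ n) (f (\<lambda>_. 0)) = f (\<lambda>_. n)" for n
  proof (induction n)
    case (Suc n)
    have "f (\<lambda>_. Suc n) = B_app ?S (f (\<lambda>_. n))"
      using app[OF const_in_K2_rel const_in_K2_rel s] by simp
    with Suc.IH show ?case by simp
  qed simp
  have numeral: "Phi (iter_program ez (program_of ?S) k)
      (nested_oracle Y (iter_context es ez (program_of ?S) k)) =
      f (\<lambda>_. k)" for k
    unfolding Phi_iter_context[OF e(1,2)] iterate ..
  define C where
    "C k = join_context eg 0 (iter_program ez (program_of ?S) k) (iter_context es ez (program_of ?S) k)"
    for k
  have "Phi (program_of (f g)) (nested_oracle Y (C k)) = f (\<lambda>_. chi X k)" for k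
    using B_app_nested_oracle[OF e(3) numeral] app[OF g(1) const_in_K2_rel g(2)]
    by (simp add: C_def)
  moreover have "computable (Some \<circ> chi Y) (\<lambda>xs. C (arg xs 0))"
    unfolding C_def iter_program_def
    by (intro computable_intros computable_compose1[OF computable_iter_context])
  ultimately show ?thesis by blast
qed

lemma embedding_separates_0_1:
  assumes "embedding_K2_B X Y f"
  shows "\<not> f (\<lambda>_. 0) \<subseteq>\<^sub>m f (\<lambda>_. 1)" and "\<not> f (\<lambda>_. 1) \<subseteq>\<^sub>m f (\<lambda>_. 0)"
proof -
  obtain w where w: "K2_app (\<lambda>_. w) (\<lambda>_. 0) = Some (\<lambda>_. 1)" "K2_app (\<lambda>_. w) (\<lambda>_. 1) = Some (\<lambda>_. 0)"
    using K2_swap by blast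
  have B01: "B_app (f (\<lambda>_. w)) (f (\<lambda>_. 0)) = f (\<lambda>_. 1)"
    and B10: "B_app (f (\<lambda>_. w)) (f (\<lambda>_. 1)) = f (\<lambda>_. 0)"
    using embedding_K2_B_app[OF assms const_in_K2_rel const_in_K2_rel] w by blast+
  have "(\<lambda>_. 0::nat) \<noteq> (\<lambda>_. 1)" by (simp add: fun_eq_iff)
  then have "f (\<lambda>_. 0) \<noteq> f (\<lambda>_. 1)"
    using assms const_in_K2_rel unfolding embedding_K2_B_def by (metis inj_on_contraD)
  from B_app_swap_incomparable[OF B01 B10 this] B_app_swap_incomparable[OF B10 B01 this[symmetric]]
  show "\<not> f (\<lambda>_. 0) \<subseteq>\<^sub>m f (\<lambda>_. 1)" "\<not> f (\<lambda>_. 1) \<subseteq>\<^sub>m f (\<lambda>_. 0)" .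
qed

lemma turing_le_if_embedding:
  assumes emb: "embedding_K2_B X Y f"
  shows "turing_le X Y"
proof -
  obtain e C where C: "computable (Some \<circ> chi Y) (\<lambda>xs. C (arg xs 0))"
    and realizes: "\<And>k. Phi e (nested_oracle Y (C k)) = f (\<lambda>_. chi X k)"
    using embedding_realizes_characteristic[OF emb] by blast
  obtain p0 a0 where p0: "f (\<lambda>_. 0) p0 = Some a0" "f (\<lambda>_. 1) p0 \<noteq> Some a0"
    using embedding_separates_0_1(1)[OF emb] unfolding map_le_def by force
  obtain p1 a1 where p1: "f (\<lambda>_. 1) p1 = Some a1" "f (\<lambda>_. 0) p1 \<noteq> Some a1"
    using embedding_separates_0_1(2)[OF emb] unfolding map_le_def by force
  have C1: "computable (Some \<circ> chi Y) (\<lambda>xs. C (arg xs 1))"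
    by (rule computable_compose1[OF C computable_arg])
  show ?thesis
  proof (rule turing_le_if_both_semidecidable)
    show "computable (Some \<circ> chi Y) (\<lambda>xs. of_bool (certifies Y (arg xs 0) (C (arg xs 1)) e p0 a0))"
      and "computable (Some \<circ> chi Y) (\<lambda>xs. of_bool (certifies Y (arg xs 0) (C (arg xs 1)) e p1 a1))"
      by (intro computable_certifies computable_arg C1)+
  next
    fix k
    show "\<exists>t. certifies Y t (C k) e p0 a0 \<or> certifies Y t (C k) e p1 a1"
      using realizes[of k] p0(1) p1(1)
      by (cases "k \<in> X") (auto simp: chi_def ex_disj_distrib Phi_nested_oracle_eq_Some_iff[symmetric])
  next
    fix t k
    assume "certifies Y t (C k) e p0 a0"
    then have "f (\<lambda>_. chi X k) p0 = Some a0"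
      unfolding realizes[symmetric] Phi_nested_oracle_eq_Some_iff by blast
    with p0(2) show "k \<notin> X" by (auto simp: chi_def)
  next
    fix t k
    assume "certifies Y t (C k) e p1 a1"
    then have "f (\<lambda>_. chi X k) p1 = Some a1"
      unfolding realizes[symmetric] Phi_nested_oracle_eq_Some_iff by blast
    with p1(2) show "k \<in> X" by (auto simp: chi_def split: if_splits)
  qed
qed

theorem theorem6p13:
  fixes X Y :: "nat set"
  shows "(\<exists>f. embedding_K2_B X Y f) \<longleftrightarrow> turing_le X Y"
  using turing_le_if_embedding embedding_if_turing_le by blast

end
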